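(* Let $\mathcal{P}$ be a topological property and let $X$ be a $T_1$-space with at least two points. Then $X$ is locally $\mathcal{P}$ if and only if every card of $X$ is locally $\mathcal{P}$. In particular, if $X$ and $Z$ are $T_1$-spaces with $\mathcal{D}(X)=\mathcal{D}(Z)$ (and at least two points), then $X$ is locally $\mathcal{P}$ if and only if $Z$ is locally $\mathcal{P}$.
   Context: A space $X$ is locally $\mathcal{P}$ if for every $x \in X$ and every open $U \ni x$ there is $A \subseteq X$ with $x \in \operatorname{int}(A) \subseteq A \subseteq U$ such that $A$ (as a subspace) has $\mathcal{P}$. For a topological space $X$ and $x \in X$, the set $X\setminus\{x\}$ carries the subspace topology. A card of $X$ is a space homeomorphic to $X \setminus \{x\}$ for some $x \in X$. The deck of $X$ is $\mathcal{D}(X)=\{[X\setminus\{x\}]_\sim : x \in X\}$, where $[Y]_\sim$ denotes the homeomorphism class of $Y$. *)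

theory Defs
  imports "HOL-Analysis.Analysis"
begin

definition topological_property :: "('a topology \<Rightarrow> bool) \<Rightarrow> bool" where
  "topological_property P \<longleftrightarrow>
     (\<forall>S T. S homeomorphic_space T \<longrightarrow> (P S \<longleftrightarrow> P T))"

definition locally_P :: "('a topology \<Rightarrow> bool) \<Rightarrow> 'a topology \<Rightarrow> bool" where
  "locally_P P X \<longleftrightarrow>
     (\<forall>x \<in> topspace X. \<forall>U. openin X U \<and> x \<in> U \<longrightarrow>
        (\<exists>A. A \<subseteq> topspace X \<and> x \<in> X interior_of A \<and> A \<subseteq> U \<and> P (subtopology X A)))"

definition card_of :: "'a topology \<Rightarrow> 'a \<Rightarrow> 'a topology" where
  "card_of X x = subtopology X (topspace X - {x})"

text \<open>Equality of decks D(X) = D(Z): the sets of homeomorphism classes of cards coincide.\<close>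
definition same_deck :: "'a topology \<Rightarrow> 'b topology \<Rightarrow> bool" where
  "same_deck X Z \<longleftrightarrow>
     (\<forall>x \<in> topspace X. \<exists>z \<in> topspace Z. card_of X x homeomorphic_space card_of Z z) \<and>
     (\<forall>z \<in> topspace Z. \<exists>x \<in> topspace X. card_of X x homeomorphic_space card_of Z z)"

end

theory Submission
  imports Defs
begin

text \<open>Being locally \<open>P\<close> is a local property: it passes to open subspaces and is recovered from
  an open cover. In a \<open>T\<^sub>1\<close>-space every card \<open>X - {x}\<close> is open, and when \<open>X\<close> has two points
  the cards cover \<open>X\<close>; hence \<open>X\<close> is locally \<open>P\<close> iff all its cards are. Since being locally \<open>P\<close>
  is invariant under homeomorphism, it is then determined by the deck.\<close>

lemma locally_PD:
  "locally_P P X \<Longrightarrow> x \<in> topspace X \<Longrightarrow> openin X U \<Longrightarrow> x \<in> U \<Longrightarrow>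
   \<exists>A. A \<subseteq> topspace X \<and> x \<in> X interior_of A \<and> A \<subseteq> U \<and> P (subtopology X A)"
  unfolding locally_P_def by blast

lemma interior_of_open_subtopology_mem:
  assumes "openin X W" "x \<in> W"
  shows "x \<in> subtopology X W interior_of A \<longleftrightarrow> x \<in> X interior_of A"
  using assms by (simp add: interior_of_subtopology_open)

lemma subtopology_subtopology_subset:
  "A \<subseteq> W \<Longrightarrow> subtopology (subtopology X W) A = subtopology X A"
  by (simp add: subtopology_subtopology Int_absorb1)

lemma locally_P_open_subtopology:
  assumes W: "openin X W" and L: "locally_P P X"
  shows "locally_P P (subtopology X W)"
  unfolding locally_P_def
proof (intro ballI allI impI)
  fix y U
  assume "y \<in> topspace (subtopology X W)" and U: "openin (subtopology X W) U \<and> y \<in> U"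
  then have y: "y \<in> topspace X" "y \<in> W" by auto
  have UX: "openin X U" "U \<subseteq> W" using U W openin_open_subtopology by blast+
  obtain A where A: "A \<subseteq> topspace X" "y \<in> X interior_of A" "A \<subseteq> U" "P (subtopology X A)"
    using locally_PD[OF L y(1) UX(1)] U by blast
  with UX have "A \<subseteq> W" by blast
  with A y W show "\<exists>A. A \<subseteq> topspace (subtopology X W) \<and> y \<in> subtopology X W interior_of A
      \<and> A \<subseteq> U \<and> P (subtopology (subtopology X W) A)"
    by (intro exI[of _ A]) (auto simp: interior_of_open_subtopology_mem subtopology_subtopology_subset)
qed

lemma locally_P_from_open_cover:
  assumes cover: "\<And>x. x \<in> topspace X \<Longrightarrow> \<exists>W. openin X W \<and> x \<in> W \<and> locally_P P (subtopology X W)"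
  shows "locally_P P X"
  unfolding locally_P_def
proof (intro ballI allI impI)
  fix x U assume x: "x \<in> topspace X" and U: "openin X U \<and> x \<in> U"
  obtain W where W: "openin X W" "x \<in> W" "locally_P P (subtopology X W)" using cover x by blast
  have "openin (subtopology X W) (U \<inter> W)"
    using U W by (simp add: openin_open_subtopology openin_Int)
  moreover have "x \<in> topspace (subtopology X W)" using x W by simp
  ultimately obtain A where A: "A \<subseteq> topspace (subtopology X W)"
      "x \<in> subtopology X W interior_of A" "A \<subseteq> U \<inter> W" "P (subtopology (subtopology X W) A)"
    using locally_PD[OF W(3)] U W by blast
  with W show "\<exists>A. A \<subseteq> topspace X \<and> x \<in> X interior_of A \<and> A \<subseteq> U \<and> P (subtopology X A)"
    by (intro exI[of _ A]) (auto simp: interior_of_open_subtopology_mem subtopology_subtopology_subset)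
qed

lemma openin_topspace_delete:
  "t1_space X \<Longrightarrow> openin X (topspace X - {x})"
  by (simp add: t1_space_openin_delete_alt)

lemma locally_P_iff_cards:
  assumes T1: "t1_space X" and two: "\<exists>a b. a \<in> topspace X \<and> b \<in> topspace X \<and> a \<noteq> b"
  shows "locally_P P X \<longleftrightarrow> (\<forall>x \<in> topspace X. locally_P P (card_of X x))"
proof
  assume "locally_P P X"
  then show "\<forall>x \<in> topspace X. locally_P P (card_of X x)"
    unfolding card_of_def using openin_topspace_delete[OF T1] locally_P_open_subtopology by blast
next
  assume cards: "\<forall>x \<in> topspace X. locally_P P (card_of X x)"
  show "locally_P P X"
  proof (rule locally_P_from_open_cover)
    fix x assume x: "x \<in> topspace X"
    obtain b where "b \<in> topspace X" "b \<noteq> x" using two by metis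
    with x cards openin_topspace_delete[OF T1, of b]
    show "\<exists>W. openin X W \<and> x \<in> W \<and> locally_P P (subtopology X W)"
      unfolding card_of_def by blast
  qed
qed

lemma locally_P_homeomorphic_map:
  assumes hom: "homeomorphic_map Y Y' f"
    and PQ: "\<And>S T. S homeomorphic_space T \<Longrightarrow> P S \<Longrightarrow> Q T"
    and L: "locally_P P Y"
  shows "locally_P Q Y'"
  unfolding locally_P_def
proof (intro ballI allI impI)
  fix y' U' assume y': "y' \<in> topspace Y'" and U': "openin Y' U' \<and> y' \<in> U'"
  have fY: "f ` topspace Y = topspace Y'" by (rule homeomorphic_imp_surjective_map[OF hom])
  with y' obtain y where y: "y \<in> topspace Y" "f y = y'" by (metis imageE)
  define U where "U = {x \<in> topspace Y. f x \<in> U'}"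
  have "openin Y U"
    unfolding U_def using homeomorphic_imp_continuous_map[OF hom]
    by (rule openin_continuous_map_preimage) (use U' in blast)
  moreover have "y \<in> U" using y U' unfolding U_def by simp
  ultimately obtain A where A: "A \<subseteq> topspace Y" "y \<in> Y interior_of A" "A \<subseteq> U" "P (subtopology Y A)"
    using locally_PD[OF L y(1)] by blast
  have "Y' interior_of (f ` A) = f ` (Y interior_of A)"
    by (rule homeomorphic_map_interior_of[OF hom A(1)])
  then have "y' \<in> Y' interior_of (f ` A)" using A(2) y(2) by auto
  moreover have "f ` A \<subseteq> topspace Y'" using A fY by blast
  moreover have "f ` A \<subseteq> U'" using A unfolding U_def by blast
  moreover have "Q (subtopology Y' (f ` A))"
  proof -
    have "homeomorphic_map (subtopology Y A) (subtopology Y' (f ` A)) f"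
      by (rule homeomorphic_map_subtopologies[OF hom]) (use A fY in auto)
    then have "subtopology Y A homeomorphic_space subtopology Y' (f ` A)"
      unfolding homeomorphic_space by blast
    then show ?thesis using A(4) by (rule PQ)
  qed
  ultimately show "\<exists>A. A \<subseteq> topspace Y' \<and> y' \<in> Y' interior_of A \<and> A \<subseteq> U' \<and> Q (subtopology Y' A)"
    by blast
qed

lemma locally_P_homeomorphic_space:
  assumes "Y homeomorphic_space Y'" "\<And>S T. S homeomorphic_space T \<Longrightarrow> P S \<Longrightarrow> Q T"
    and "locally_P P Y"
  shows "locally_P Q Y'"
proof -
  obtain f where "homeomorphic_map Y Y' f" using assms(1) unfolding homeomorphic_space by blast
  then show ?thesis using assms(2,3) by (rule locally_P_homeomorphic_map)
qed

lemma same_deck_locally_P_cards: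
  assumes deck: "same_deck X Z"
    and PQ: "\<forall>S T. S homeomorphic_space T \<longrightarrow> (P S \<longleftrightarrow> Q T)"
  shows "(\<forall>x \<in> topspace X. locally_P P (card_of X x)) \<longleftrightarrow>
         (\<forall>z \<in> topspace Z. locally_P Q (card_of Z z))"
proof -
  have P_to_Q: "Q T" if "S homeomorphic_space T" "P S" for S T
    using that PQ[rule_format, of S T] by simp
  have Q_to_P: "P T" if "S homeomorphic_space T" "Q S" for S T
  proof -
    from that(1) have "T homeomorphic_space S" by (rule homeomorphic_space_sym[THEN iffD1])
    with that(2) PQ[rule_format, of T S] show ?thesis by simp
  qed
  show ?thesis
  proof (intro iffI ballI)
    fix z assume cards: "\<forall>x \<in> topspace X. locally_P P (card_of X x)" and z: "z \<in> topspace Z"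
    from deck z have "\<exists>x \<in> topspace X. card_of X x homeomorphic_space card_of Z z"
      unfolding same_deck_def by simp
    then obtain x where x: "x \<in> topspace X" "card_of X x homeomorphic_space card_of Z z"
      by blast
    show "locally_P Q (card_of Z z)"
      by (rule locally_P_homeomorphic_space[OF x(2) P_to_Q cards[rule_format, OF x(1)]])
  next
    fix x assume cards: "\<forall>z \<in> topspace Z. locally_P Q (card_of Z z)" and x: "x \<in> topspace X"
    from deck x have "\<exists>z \<in> topspace Z. card_of X x homeomorphic_space card_of Z z"
      unfolding same_deck_def by simp
    then obtain z where z: "z \<in> topspace Z" "card_of X x homeomorphic_space card_of Z z"
      by blast
    from z(2) have "card_of Z z homeomorphic_space card_of X x"
      by (rule homeomorphic_space_sym[THEN iffD1])
    then show "locally_P P (card_of X x)"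
      by (rule locally_P_homeomorphic_space[OF _ Q_to_P cards[rule_format, OF z(1)]])
  qed
qed

theorem theorem3p2:
  fixes P :: "'a topology \<Rightarrow> bool" and Q :: "'b topology \<Rightarrow> bool"
    and X :: "'a topology" and Z :: "'b topology"
  assumes "topological_property P" and "topological_property Q"
    and "\<forall>S T. S homeomorphic_space T \<longrightarrow> (P S \<longleftrightarrow> Q T)"
    and "t1_space X" and "\<exists>a b. a \<in> topspace X \<and> b \<in> topspace X \<and> a \<noteq> b"
  shows "(locally_P P X \<longleftrightarrow> (\<forall>x \<in> topspace X. locally_P P (card_of X x)))
    \<and> ((t1_space Z \<and> (\<exists>a b. a \<in> topspace Z \<and> b \<in> topspace Z \<and> a \<noteq> b) \<and> same_deck X Z)
        \<longrightarrow> (locally_P P X \<longleftrightarrow> locally_P Q Z))"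
proof (intro conjI impI; (elim conjE)?)
  show X_cards: "locally_P P X \<longleftrightarrow> (\<forall>x \<in> topspace X. locally_P P (card_of X x))"
    using assms(4,5) by (rule locally_P_iff_cards)
  assume Z: "t1_space Z" "\<exists>a b. a \<in> topspace Z \<and> b \<in> topspace Z \<and> a \<noteq> b"
    and deck: "same_deck X Z"
  have Z_cards: "locally_P Q Z \<longleftrightarrow> (\<forall>z \<in> topspace Z. locally_P Q (card_of Z z))"
    using Z by (rule locally_P_iff_cards)
  show "locally_P P X \<longleftrightarrow> locally_P Q Z"
    unfolding X_cards Z_cards using deck assms(3) by (rule same_deck_locally_P_cards)
qed

end
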